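(* Let $d$ be a premetric with open balls on a topological space $X$, and let $A\subset X$ be non-empty. Then the following are equivalent: (1) $\overline d_A=\overline d^\circ_A$; (2) $\overline d_A$ is continuous; (3) $\overline d^\circ_A$ is continuous. Moreover, the following two conditions are equivalent and imply (1)–(3): (4) $d_A$ is continuous; (5) $\overline d_A=\overline d^\circ_A=d_A$.
   Context: A premetric on $X$ is $d:X\times X\to[0,\infty)$ with $d(x,x)=0$. $B_d(x,\varepsilon)=\{y:d(x,y)<\varepsilon\}$, $B_d(A,\varepsilon)=\bigcup_{a\in A}B_d(a,\varepsilon)$; $d$ has open balls if every $B_d(x,\varepsilon)$ is open in $X$. For non-empty $A\subset X$ and $x\in X$: $d_A(x)=\inf\{\varepsilon>0:x\in B_d(A,\varepsilon)\}$, $\overline d_A(x)=\inf\{\varepsilon>0:x\in\overline{B_d(A,\varepsilon)}\}$, $\overline d^\circ_A(x)=\inf\{\varepsilon>0:x\in B_d(A,\varepsilon)\cup\mathrm{int}\,\overline{B_d(A,\varepsilon)}\}$. *)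

theory Defs
  imports "HOL-Analysis.Analysis"
begin

definition premetric :: "('a \<Rightarrow> 'a \<Rightarrow> real) \<Rightarrow> bool" where
  "premetric d \<longleftrightarrow> (\<forall>x y. 0 \<le> d x y) \<and> (\<forall>x. d x x = 0)"

definition pball :: "('a \<Rightarrow> 'a \<Rightarrow> real) \<Rightarrow> 'a \<Rightarrow> real \<Rightarrow> 'a set" where
  "pball d x e = {y. d x y < e}"

definition pball_set :: "('a \<Rightarrow> 'a \<Rightarrow> real) \<Rightarrow> 'a set \<Rightarrow> real \<Rightarrow> 'a set" where
  "pball_set d A e = (\<Union>a\<in>A. pball d a e)"

definition has_open_balls :: "('a::topological_space \<Rightarrow> 'a \<Rightarrow> real) \<Rightarrow> bool" where
  "has_open_balls d \<longleftrightarrow> (\<forall>x e. open (pball d x e))"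

definition dA :: "('a \<Rightarrow> 'a \<Rightarrow> real) \<Rightarrow> 'a set \<Rightarrow> 'a \<Rightarrow> real" where
  "dA d A x = Inf {e. e > 0 \<and> x \<in> pball_set d A e}"

definition cdA :: "('a::topological_space \<Rightarrow> 'a \<Rightarrow> real) \<Rightarrow> 'a set \<Rightarrow> 'a \<Rightarrow> real" where
  "cdA d A x = Inf {e. e > 0 \<and> x \<in> closure (pball_set d A e)}"

definition cidA :: "('a::topological_space \<Rightarrow> 'a \<Rightarrow> real) \<Rightarrow> 'a set \<Rightarrow> 'a \<Rightarrow> real" where
  "cidA d A x = Inf {e. e > 0 \<and>
      x \<in> pball_set d A e \<union> interior (closure (pball_set d A e))}"

end

theory Submission
  imports Defs
begin

text \<open>
  Write B(e) for B_d(A,e). Each of d_A, the barred and the circled function is, at x, the infimum of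
  the levels e with x in a monotone family of sets, namely B(e), cl B(e) and B(e) \<union> int cl B(e);
  these families are nested, so barred \<le> circled \<le> d_A. Closed levels give open strict superlevel
  sets and open levels (the balls are open) give open strict sublevel sets, so each of the equalities
  yields continuity. Conversely, if the infimum g over a family containing B is continuous, the
  closed set {g \<le> s} contains B(s), hence cl B(s), so g is below the barred function; and if the
  barred function is continuous, its open strict sublevel set at s lies in cl B(s), hence in
  int cl B(s), so the circled function is below it.
\<close>

definition level_inf :: "(real \<Rightarrow> 'a set) \<Rightarrow> 'a \<Rightarrow> real" where
  "level_inf F x = Inf {e. e > 0 \<and> x \<in> F e}"

locale level_family =
  fixes F :: "real \<Rightarrow> 'a set"
  assumes mono: "e \<le> e' \<Longrightarrow> F e \<subseteq> F e'"
    and empty: "e \<le> 0 \<Longrightarrow> F e = {}"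
    and cover: "\<exists>e. x \<in> F e"
begin

lemma levels_nonempty: "{e. e > 0 \<and> x \<in> F e} \<noteq> {}"
  using cover[of x] empty by (metis (mono_tags) empty_iff mem_Collect_eq not_le)

lemma mem_imp_pos: "x \<in> F e \<Longrightarrow> 0 < e"
  using empty by (metis empty_iff not_le)

lemma level_inf_less_iff: "level_inf F x < t \<longleftrightarrow> (\<exists>e<t. x \<in> F e)"
proof -
  have "bdd_below {e. e > 0 \<and> x \<in> F e}"
    by (rule bdd_belowI[of _ 0]) simp
  then have "level_inf F x < t \<longleftrightarrow> (\<exists>e\<in>{e. e > 0 \<and> x \<in> F e}. e < t)"
    unfolding level_inf_def by (rule cInf_less_iff[OF levels_nonempty])
  then show ?thesis
    using mem_imp_pos by blast
qed

lemma level_inf_less_imp_mem: "level_inf F x < t \<Longrightarrow> x \<in> F t"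
  using level_inf_less_iff mono by (meson less_imp_le subsetD)

lemma level_inf_le: "x \<in> F e \<Longrightarrow> level_inf F x \<le> e"
  by (rule dense_ge) (meson level_inf_less_iff less_imp_le)

lemma level_inf_le_iff: "level_inf F x \<le> t \<longleftrightarrow> (\<forall>e>t. x \<in> F e)"
proof
  show "\<forall>e>t. x \<in> F e" if "level_inf F x \<le> t"
    using that by (intro allI impI level_inf_less_imp_mem) linarith
  show "level_inf F x \<le> t" if "\<forall>e>t. x \<in> F e"
    by (rule dense_ge) (use that level_inf_le in blast)
qed

end

context
  fixes F :: "real \<Rightarrow> 'a::topological_space set"
  assumes F: "level_family F"
begin

interpretation level_family F by (fact F)

lemma level_family_closure: "level_family (\<lambda>e. closure (F e))"
proof
  show "closure (F e) \<subseteq> closure (F e')" if "e \<le> e'" for e e'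
    using closure_mono[OF mono[OF that]] .
  show "closure (F e) = {}" if "e \<le> 0" for e
    using empty[OF that] by simp
  show "\<exists>e. x \<in> closure (F e)" for x
    using cover[of x] closure_subset by blast
qed

lemma level_family_union_interior_closure:
  "level_family (\<lambda>e. F e \<union> interior (closure (F e)))"
proof
  show "F e \<union> interior (closure (F e)) \<subseteq> F e' \<union> interior (closure (F e'))" if "e \<le> e'" for e e'
    using mono[OF that] interior_mono[OF closure_mono[OF mono[OF that]]] by blast
  show "F e \<union> interior (closure (F e)) = {}" if "e \<le> 0" for e
    using empty[OF that] by simp
  show "\<exists>e. x \<in> F e \<union> interior (closure (F e))" for x
    using cover[of x] by blast
qed

end

lemma level_inf_antimono:
  assumes "level_family F" and "\<And>e. F e \<subseteq> G e"
  shows "level_inf G x \<le> level_inf F x"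
  unfolding level_inf_def
  by (rule cInf_superset_mono)
    (use level_family.levels_nonempty[OF assms(1)] assms(2) in \<open>auto intro: bdd_belowI[of _ 0]\<close>)

lemma open_superlevel_level_inf:
  fixes F :: "real \<Rightarrow> 'a::topological_space set"
  assumes "level_family F" and "\<And>e. closed (F e)"
  shows "open {x. t < level_inf F x}"
proof -
  have "{x. t < level_inf F x} = - (\<Inter>e\<in>{t<..}. F e)"
    using level_family.level_inf_le_iff[OF assms(1)]
    by (simp add: set_eq_iff flip: not_le) (meson greaterThan_iff not_le)
  moreover have "closed (\<Inter>e\<in>{t<..}. F e)"
    using assms(2) by blast
  ultimately show ?thesis
    by (simp only: open_Compl)
qed

lemma open_sublevel_level_inf:
  fixes F :: "real \<Rightarrow> 'a::topological_space set"
  assumes "level_family F" and "\<And>e. open (F e)"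
  shows "open {x. level_inf F x < t}"
proof -
  have "{x. level_inf F x < t} = (\<Union>e\<in>{..<t}. F e)"
    using level_family.level_inf_less_iff[OF assms(1)] by auto
  then show ?thesis
    using assms(2) by auto
qed

lemma continuous_on_level_inf_if_eq:
  fixes F G :: "real \<Rightarrow> 'a::topological_space set"
  assumes "level_family F" and "level_family G" and "\<And>e. closed (F e)" and "\<And>e. open (G e)"
    and "level_inf F = level_inf G"
  shows "continuous_on UNIV (level_inf G)"
  using open_superlevel_level_inf[OF assms(1,3)] open_sublevel_level_inf[OF assms(2,4)] assms(5)
  by (simp flip: continuous_map_iff_continuous2 add: continuous_map_upper_lower_semicontinuous_lt)

lemma level_inf_le_level_inf_closure:
  fixes F G :: "real \<Rightarrow> 'a::topological_space set"
  assumes "level_family F" and "level_family G" and "\<And>e. F e \<subseteq> G e"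
    and "continuous_on UNIV (level_inf G)"
  shows "level_inf G x \<le> level_inf (\<lambda>e. closure (F e)) x"
proof (rule dense_ge)
  fix s assume "level_inf (\<lambda>e. closure (F e)) x < s"
  then have "x \<in> closure (F s)"
    using level_family.level_inf_less_imp_mem[OF level_family_closure[OF assms(1)]] by blast
  moreover have "closure (F s) \<subseteq> {y. level_inf G y \<le> s}"
    using assms(3) level_family.level_inf_le[OF assms(2)]
    by (intro closure_minimal closed_Collect_le[OF assms(4)]) auto
  ultimately show "level_inf G x \<le> s"
    by blast
qed

lemma level_inf_union_interior_closure_le:
  fixes F :: "real \<Rightarrow> 'a::topological_space set"
  assumes "level_family F" and "continuous_on UNIV (level_inf (\<lambda>e. closure (F e)))"
  shows "level_inf (\<lambda>e. F e \<union> interior (closure (F e))) x \<le> level_inf (\<lambda>e. closure (F e)) x"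
proof (rule dense_ge)
  fix s assume s: "level_inf (\<lambda>e. closure (F e)) x < s"
  have "{y. level_inf (\<lambda>e. closure (F e)) y < s} \<subseteq> closure (F s)"
    using level_family.level_inf_less_imp_mem[OF level_family_closure[OF assms(1)]] by blast
  then have "{y. level_inf (\<lambda>e. closure (F e)) y < s} \<subseteq> interior (closure (F s))"
    by (intro interior_maximal open_Collect_less[OF assms(2)]) auto
  with s show "level_inf (\<lambda>e. F e \<union> interior (closure (F e))) x \<le> s"
    by (intro level_family.level_inf_le[OF level_family_union_interior_closure[OF assms(1)]]) blast
qed

lemma level_family_pball_set:
  assumes "premetric d" and "A \<noteq> {}"
  shows "level_family (pball_set d A)"
proof
  show "pball_set d A e \<subseteq> pball_set d A e'" if "e \<le> e'" for e e'
    using that unfolding pball_set_def pball_def by auto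
  show "pball_set d A e = {}" if "e \<le> 0" for e
    using that assms(1) unfolding pball_set_def pball_def premetric_def
    by (auto simp: not_less intro: order_trans)
  obtain a where "a \<in> A"
    using assms(2) by blast
  then show "\<exists>e. x \<in> pball_set d A e" for x
    unfolding pball_set_def pball_def by (intro exI[of _ "d a x + 1"]) (auto intro!: bexI[of _ a])
qed

lemma open_pball_set: "has_open_balls d \<Longrightarrow> open (pball_set d A e)"
  unfolding has_open_balls_def pball_set_def by auto

theorem proposition1p2:
  fixes d :: "'a::topological_space \<Rightarrow> 'a \<Rightarrow> real" and A :: "'a set"
  assumes "premetric d" and "has_open_balls d" and "A \<noteq> {}"
  shows "(cdA d A = cidA d A \<longleftrightarrow> continuous_on UNIV (cdA d A))
       \<and> (continuous_on UNIV (cdA d A) \<longleftrightarrow> continuous_on UNIV (cidA d A))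
       \<and> (continuous_on UNIV (dA d A) \<longleftrightarrow> (cdA d A = cidA d A \<and> cidA d A = dA d A))
       \<and> (continuous_on UNIV (dA d A) \<longrightarrow> cdA d A = cidA d A)"
proof -
  define B where "B = pball_set d A"
  have B: "level_family B" and open_B: "open (B e)" for e
    using level_family_pball_set[OF assms(1,3)] open_pball_set[OF assms(2)] by (simp_all add: B_def)
  note C = level_family_closure[OF B] and I = level_family_union_interior_closure[OF B]
  have dA: "dA d A = level_inf B"
    and cdA: "cdA d A = level_inf (\<lambda>e. closure (B e))"
    and cidA: "cidA d A = level_inf (\<lambda>e. B e \<union> interior (closure (B e)))"
    by (simp_all add: fun_eq_iff dA_def cdA_def cidA_def level_inf_def B_def)
  have closed_C: "closed (closure (B e))" and open_I: "open (B e \<union> interior (closure (B e)))" for e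
    using open_B by auto
  have cdA_le_cidA: "cdA d A x \<le> cidA d A x" and cidA_le_dA: "cidA d A x \<le> dA d A x" for x
    unfolding dA cdA cidA using closure_subset interior_subset
    by (blast intro: level_inf_antimono[OF I] level_inf_antimono[OF B])+
  have "cdA d A = cidA d A \<Longrightarrow> continuous_on UNIV (cidA d A)"
    unfolding cdA cidA by (rule continuous_on_level_inf_if_eq[OF C I closed_C open_I])
  moreover have "cdA d A = cidA d A" if "continuous_on UNIV (cdA d A)"
    using that cdA_le_cidA unfolding cdA cidA
    by (intro ext antisym level_inf_union_interior_closure_le[OF B]) auto
  moreover have "cdA d A = cidA d A" if "continuous_on UNIV (cidA d A)"
    using that cdA_le_cidA unfolding cdA cidA
    by (intro ext antisym level_inf_le_level_inf_closure[OF B I]) auto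
  moreover have "cdA d A = dA d A" if "continuous_on UNIV (dA d A)"
    using that cdA_le_cidA cidA_le_dA unfolding dA cdA cidA
    by (intro ext antisym level_inf_le_level_inf_closure[OF B B]) (auto intro: order_trans)
  moreover have "cdA d A = dA d A \<Longrightarrow> continuous_on UNIV (dA d A)"
    unfolding cdA dA by (rule continuous_on_level_inf_if_eq[OF C B closed_C open_B])
  ultimately show ?thesis
    using cdA_le_cidA cidA_le_dA by (metis antisym)
qed

end
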